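(* Let $n\ge 2$ be even and $k\ge 3$. Let $Q(n,k)$ be the configuration with exactly $2k-1$ levels in which: level $2k-1$ (top) consists of $\frac n2$ blocks in consecutive slots; level $2k-2$ is full ($n$ blocks); and each level $i$ with $1\le i\le 2k-3$ consists of $\frac n2$ blocks in pairwise non-adjacent slots. Then the genus of (the boundary surface of) $Q(n,k)$ is $$ g(n,k)=\frac{n(n-2)(k-2)}{2}. $$
   Context: Blocks are boxes of length $n$, width $1$, height $1$. Level $i$ occupies heights $[i-1,i]$ and has $n$ slots $j=1,\dots,n$; a block in slot $j$ of an odd level $i$ is $[0,n]\times[j-1,j]\times[i-1,i]$, and a block in slot $j$ of an even level $i$ is $[j-1,j]\times[0,n]\times[i-1,i]$. Slots $j,j'$ are adjacent if $|j-j'|=1$. The genus of a configuration is the genus of the boundary surface of the union of its blocks (a connected closed polyhedral surface). The configuration uses $nk$ blocks in total. *)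

theory Defs
  imports Complex_Main "HOL-Library.Product_Plus"
begin

text \<open>Lattice points of R^3 (integer coordinates); a unit cube is named by its
lower corner.  Axis 0 = x, 1 = y, 2 = z.\<close>

type_synonym pt = "int \<times> int \<times> int"

definition unitv :: "nat \<Rightarrow> pt" where
  "unitv a = (if a = 0 then (1,0,0) else if a = 1 then (0,1,0) else (0,0,1))"

definition axes :: "nat set" where "axes = {0,1,2}"

text \<open>Unit cubes occupied by the block in slot j (1..n) of level i (1-based):
odd level: [0,n] x [j-1,j] x [i-1,i]; even level: [j-1,j] x [0,n] x [i-1,i].\<close>

definition block_cubes :: "nat \<Rightarrow> nat \<Rightarrow> nat \<Rightarrow> pt set" where
  "block_cubes n i j =
     (if odd i then {(x, int j - 1, int i - 1) | x. 0 \<le> x \<and> x < int n}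
      else {(int j - 1, y, int i - 1) | y. 0 \<le> y \<and> y < int n})"

definition config_cubes :: "nat \<Rightarrow> (nat \<times> nat) set \<Rightarrow> pt set" where
  "config_cubes n B = (\<Union>(i,j)\<in>B. block_cubes n i j)"

text \<open>A unit square (q,b): the square in the plane x_b = q_b with lower corner q,
spanned by the two axes different from b.  It separates the cubes with lower
corners q and q - e_b.\<close>

definition boundary_faces :: "pt set \<Rightarrow> (pt \<times> nat) set" where
  "boundary_faces C = {(q,b). b \<in> axes \<and> ((q \<in> C) \<noteq> (q - unitv b \<in> C))}"

definition face_vertices :: "pt \<times> nat \<Rightarrow> pt set" where
  "face_vertices f = (case f of (q,b) \<Rightarrow>
     {q + sum unitv S | S. S \<subseteq> axes - {b}})"

text \<open>A unit edge (p,a) is the segment from p to p + e_a.\<close>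

definition face_edges :: "pt \<times> nat \<Rightarrow> (pt \<times> nat) set" where
  "face_edges f = (case f of (q,b) \<Rightarrow>
     {(q + sum unitv S, a) | a S. a \<in> axes - {b} \<and> S \<subseteq> axes - {a,b}})"

definition boundary_euler_char :: "pt set \<Rightarrow> int" where
  "boundary_euler_char C =
     int (card (\<Union>f\<in>boundary_faces C. face_vertices f))
   - int (card (\<Union>f\<in>boundary_faces C. face_edges f))
   + int (card (boundary_faces C))"

text \<open>Genus of the (connected, closed, orientable) boundary surface: chi = 2 - 2g.\<close>

definition boundary_genus :: "pt set \<Rightarrow> real" where
  "boundary_genus C = (2 - real_of_int (boundary_euler_char C)) / 2"

definition level :: "(nat \<times> nat) set \<Rightarrow> nat \<Rightarrow> nat set" where
  "level B i = {j. (i,j) \<in> B}"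

definition is_Q :: "nat \<Rightarrow> nat \<Rightarrow> (nat \<times> nat) set \<Rightarrow> bool" where
  "is_Q n k B \<longleftrightarrow>
     B \<subseteq> {1..2*k-1} \<times> {1..n} \<and>
     (\<exists>a. level B (2*k-1) = {a..<a + n div 2}) \<and>
     level B (2*k-2) = {1..n} \<and>
     (\<forall>i\<in>{1..2*k-3}. card (level B i) = n div 2 \<and>
        (\<forall>j\<in>level B i. \<forall>j'\<in>level B i. j' \<noteq> j + 1))"

end

theory Submission
  imports Defs
begin

(* A lattice vertex or edge lies on the boundary surface iff the unit cubes around it are
   neither all filled nor all empty.  The union of the blocks is a stack of product layers:
   the cubes of level i are P i \<times> Q i, where one factor is the full row {0..<n} and the other
   one the set of occupied slots.  Hence every cell of the boundary complex is governed by the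
   (at most two) layers adjacent to its height, and V - E + F splits into a sum over the
   horizontal planes.  Within a layer the vertical edges cancel against the vertical faces,
   and the plane between two crossing layers whose slot sets consist of r and r' runs of
   consecutive slots contributes r + r' - 2 r r'.  For Q(n,k) the levels have
   0, n/2, ..., n/2, 1, 1, 0 runs, so chi = 2 - (2k - 4) * 2 * (n/2) * (n/2 - 1). *)

section \<open>Cells of the boundary surface\<close>

lemma unitv_simps [simp]: "unitv 0 = (1,0,0)" "unitv 1 = (0,1,0)" "unitv (Suc 0) = (0,1,0)" "unitv 2 = (0,0,1)"
  by (auto simp: unitv_def)

lemma axes_0 [simp]: "0 \<in> axes" and axes_1 [simp]: "1 \<in> axes" and axes_2 [simp]: "2 \<in> axes"
  by (simp_all add: axes_def)

lemma axes_cases: "b \<in> axes \<Longrightarrow> (b = 0 \<Longrightarrow> P) \<Longrightarrow> (b = 1 \<Longrightarrow> P) \<Longrightarrow> (b = 2 \<Longrightarrow> P) \<Longrightarrow> P"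
  by (auto simp: axes_def)

lemma mem_boundary_faces: "(q,b) \<in> boundary_faces C \<longleftrightarrow> b \<in> axes \<and> (q \<in> C) \<noteq> (q - unitv b \<in> C)"
  by (simp add: boundary_faces_def)

lemma image_subsets_of_pair: "{g S | S. S \<subseteq> {u,v}} = {g {}, g {u}, g {v}, g {u,v}}"
proof -
  have "{g S | S. S \<subseteq> {u,v}} = g ` Pow {u,v}" by auto
  then show ?thesis by (auto simp: Pow_insert)
qed

lemma face_vertices_0: "face_vertices ((a,b,c),0) = {(a,b,c),(a,b+1,c),(a,b,c+1),(a,b+1,c+1)}"
  and face_vertices_1: "face_vertices ((a,b,c),1) = {(a,b,c),(a+1,b,c),(a,b,c+1),(a+1,b,c+1)}"
  and face_vertices_2: "face_vertices ((a,b,c),2) = {(a,b,c),(a+1,b,c),(a,b+1,c),(a+1,b+1,c)}"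
proof -
  have "axes - {0} = {1,2::nat}" "axes - {1} = {0,2::nat}" "axes - {2} = {0,1::nat}"
    by (auto simp: axes_def)
  then show "face_vertices ((a,b,c),0) = {(a,b,c),(a,b+1,c),(a,b,c+1),(a,b+1,c+1)}"
    "face_vertices ((a,b,c),1) = {(a,b,c),(a+1,b,c),(a,b,c+1),(a+1,b,c+1)}"
    "face_vertices ((a,b,c),2) = {(a,b,c),(a+1,b,c),(a,b+1,c),(a+1,b+1,c)}"
    unfolding face_vertices_def by (simp_all add: image_subsets_of_pair)
qed

lemma face_edges_eq_image:
  "face_edges (q,b) = (\<lambda>(a,S). (q + sum unitv S, a)) ` {(a,S). a \<in> axes - {b} \<and> S \<subseteq> axes - {a,b}}"
  unfolding face_edges_def by auto

lemma face_edges_0: "face_edges ((a,b,c),0) = {((a,b,c),1),((a,b,c+1),1),((a,b,c),2),((a,b+1,c),2)}"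
proof -
  have "{(a,S). a \<in> axes - {0} \<and> S \<subseteq> axes - {a,0}} = {(1,{}),(1,{2}),(2,{}),(2,{1::nat})}"
    unfolding axes_def by auto
  then show ?thesis unfolding face_edges_eq_image by simp
qed

lemma face_edges_1: "face_edges ((a,b,c),1) = {((a,b,c),0),((a,b,c+1),0),((a,b,c),2),((a+1,b,c),2)}"
proof -
  have "{(a,S). a \<in> axes - {1} \<and> S \<subseteq> axes - {a,1}} = {(0,{}),(0,{2}),(2,{}),(2,{0::nat})}"
    unfolding axes_def by auto
  then show ?thesis unfolding face_edges_eq_image by simp
qed

lemma face_edges_2: "face_edges ((a,b,c),2) = {((a,b,c),0),((a,b+1,c),0),((a,b,c),1),((a+1,b,c),1)}"
proof -
  have "{(a,S). a \<in> axes - {2} \<and> S \<subseteq> axes - {a,2}} = {(0,{}),(0,{1}),(1,{}),(1,{0::nat})}"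
    unfolding axes_def by auto
  then show ?thesis unfolding face_edges_eq_image by simp
qed

lemmas face_cells_simps = face_vertices_0 face_vertices_1 face_vertices_2
  face_edges_0 face_edges_1 face_edges_2
  (* simp rewrites the axis (1::nat) to Suc 0 in some goals *)
  face_vertices_1[unfolded One_nat_def] face_edges_1[unfolded One_nat_def]

definition boundary_vertices :: "pt set \<Rightarrow> pt set" where
  "boundary_vertices C = (\<Union>f\<in>boundary_faces C. face_vertices f)"

definition boundary_edges :: "pt set \<Rightarrow> (pt \<times> nat) set" where
  "boundary_edges C = (\<Union>f\<in>boundary_faces C. face_edges f)"

lemma boundary_edges_axes: "(p,a) \<in> boundary_edges C \<Longrightarrow> a \<in> axes"
  unfolding boundary_edges_def face_edges_def by auto

lemma mem_boundary_cells_iff_split: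
  fixes cells :: "pt \<times> nat \<Rightarrow> 'c set" and N :: "pt set"
  assumes between: "\<And>q b. b \<in> axes \<Longrightarrow> c \<in> cells (q,b) \<Longrightarrow> q \<in> N \<and> q - unitv b \<in> N"
    and linked: "\<And>C. (\<And>q b. b \<in> axes \<Longrightarrow> c \<in> cells (q,b) \<Longrightarrow> (q \<in> C) = (q - unitv b \<in> C))
                   \<Longrightarrow> \<forall>u\<in>N. \<forall>w\<in>N. (u \<in> C) = (w \<in> C)"
  shows "c \<in> (\<Union>f\<in>boundary_faces C. cells f) \<longleftrightarrow> N \<inter> C \<noteq> {} \<and> \<not> N \<subseteq> C"
proof
  assume "c \<in> (\<Union>f\<in>boundary_faces C. cells f)"
  then obtain q b where face: "b \<in> axes" "(q \<in> C) \<noteq> (q - unitv b \<in> C)" and "c \<in> cells (q,b)"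
    unfolding boundary_faces_def by blast
  then have "q \<in> N" "q - unitv b \<in> N" using between by auto
  with face(2) show "N \<inter> C \<noteq> {} \<and> \<not> N \<subseteq> C" by blast
next
  assume split: "N \<inter> C \<noteq> {} \<and> \<not> N \<subseteq> C"
  show "c \<in> (\<Union>f\<in>boundary_faces C. cells f)"
  proof (rule ccontr)
    assume "c \<notin> (\<Union>f\<in>boundary_faces C. cells f)"
    then have "(q \<in> C) = (q - unitv b \<in> C)" if "b \<in> axes" "c \<in> cells (q,b)" for q b
      using that unfolding boundary_faces_def by blast
    then have "\<forall>u\<in>N. \<forall>w\<in>N. (u \<in> C) = (w \<in> C)" by (rule linked)
    with split show False by blast
  qed
qed

definition incident_coords :: "int \<Rightarrow> int set" where
  "incident_coords x = {x - 1, x}"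

definition cubes_at_vertex :: "pt \<Rightarrow> pt set" where
  "cubes_at_vertex p = (case p of (x,y,z) \<Rightarrow> incident_coords x \<times> incident_coords y \<times> incident_coords z)"

definition cubes_at_edge :: "pt \<times> nat \<Rightarrow> pt set" where
  "cubes_at_edge e = (case e of ((x,y,z),a) \<Rightarrow>
     (if a = 0 then {x} else incident_coords x) \<times> (if a = 1 then {y} else incident_coords y) \<times>
     (if a = 2 then {z} else incident_coords z))"

lemma cubes_at_vertex_eq:
  "cubes_at_vertex (x,y,z) = incident_coords x \<times> incident_coords y \<times> incident_coords z"
  by (simp add: cubes_at_vertex_def)

lemma cubes_at_edge_0: "cubes_at_edge ((x,y,z),0) = {x} \<times> incident_coords y \<times> incident_coords z"
  and cubes_at_edge_1: "cubes_at_edge ((x,y,z),1) = incident_coords x \<times> {y} \<times> incident_coords z"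
  and cubes_at_edge_2: "cubes_at_edge ((x,y,z),2) = incident_coords x \<times> incident_coords y \<times> {z}"
  by (simp_all add: cubes_at_edge_def)

lemma mem_cubes_at_vertex: "(u,v,w) \<in> cubes_at_vertex (x,y,z) \<longleftrightarrow> u \<in> {x-1,x} \<and> v \<in> {y-1,y} \<and> w \<in> {z-1,z}"
  unfolding cubes_at_vertex_def incident_coords_def by blast

lemma mem_boundary_vertices:
  "p \<in> boundary_vertices C \<longleftrightarrow> cubes_at_vertex p \<inter> C \<noteq> {} \<and> \<not> cubes_at_vertex p \<subseteq> C"
  unfolding boundary_vertices_def
proof (rule mem_boundary_cells_iff_split)
  obtain x y z where p: "p = (x,y,z)" by (cases p)
  show "q \<in> cubes_at_vertex p \<and> q - unitv b \<in> cubes_at_vertex p"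
    if "b \<in> axes" "p \<in> face_vertices (q,b)" for q b
    using that unfolding p
    by (cases q; elim axes_cases; auto simp: face_cells_simps mem_cubes_at_vertex)
  fix C :: "pt set"
  assume h: "(q \<in> C) = (q - unitv b \<in> C)" if "b \<in> axes" "p \<in> face_vertices (q,b)" for q b
  have x: "((x,v,w) \<in> C) = ((x-1,v,w) \<in> C)" if "v \<in> {y-1,y}" "w \<in> {z-1,z}" for v w
    using h[of 0 "(x,v,w)"] that by (auto simp: p axes_def face_cells_simps)
  have y: "((u,y,w) \<in> C) = ((u,y-1,w) \<in> C)" if "u \<in> {x-1,x}" "w \<in> {z-1,z}" for u w
    using h[of 1 "(u,y,w)"] that by (auto simp: p axes_def face_cells_simps)
  have z: "((u,v,z) \<in> C) = ((u,v,z-1) \<in> C)" if "u \<in> {x-1,x}" "v \<in> {y-1,y}" for u v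
    using h[of 2 "(u,v,z)"] that by (auto simp: p axes_def face_cells_simps)
  show "\<forall>u\<in>cubes_at_vertex p. \<forall>w\<in>cubes_at_vertex p. (u \<in> C) = (w \<in> C)"
    unfolding p cubes_at_vertex_def incident_coords_def using x y z by auto
qed

lemma mem_cubes_at_edge: "(u,v,w) \<in> cubes_at_edge ((x,y,z),a) \<longleftrightarrow>
    u \<in> (if a = 0 then {x} else {x-1,x}) \<and> v \<in> (if a = 1 then {y} else {y-1,y}) \<and>
    w \<in> (if a = 2 then {z} else {z-1,z})"
  unfolding cubes_at_edge_def incident_coords_def by auto

lemma mem_boundary_edges:
  assumes "a \<in> axes"
  shows "(p,a) \<in> boundary_edges C \<longleftrightarrow> cubes_at_edge (p,a) \<inter> C \<noteq> {} \<and> \<not> cubes_at_edge (p,a) \<subseteq> C"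
  unfolding boundary_edges_def
proof (rule mem_boundary_cells_iff_split)
  obtain x y z where p: "p = (x,y,z)" by (cases p)
  show "q \<in> cubes_at_edge (p,a) \<and> q - unitv b \<in> cubes_at_edge (p,a)"
    if "b \<in> axes" "(p,a) \<in> face_edges (q,b)" for q b
    using that unfolding p
    by (cases q; elim axes_cases; auto simp: face_cells_simps mem_cubes_at_edge)
  fix C :: "pt set"
  assume h: "(q \<in> C) = (q - unitv b \<in> C)" if "b \<in> axes" "(p,a) \<in> face_edges (q,b)" for q b
  let ?X = "if a = 0 then {x} else {x-1,x}" and ?Y = "if a = 1 then {y} else {y-1,y}"
    and ?Z = "if a = 2 then {z} else {z-1,z}"
  have x: "((x,v,w) \<in> C) = ((x-1,v,w) \<in> C)" if "a \<noteq> 0" "v \<in> ?Y" "w \<in> ?Z" for v w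
    using h[of 0 "(x,v,w)"] that assms by (auto simp: p axes_def face_cells_simps)
  have y: "((u,y,w) \<in> C) = ((u,y-1,w) \<in> C)" if "a \<noteq> 1" "u \<in> ?X" "w \<in> ?Z" for u w
    using h[of 1 "(u,y,w)"] that assms by (auto simp: p axes_def face_cells_simps)
  have z: "((u,v,z) \<in> C) = ((u,v,z-1) \<in> C)" if "a \<noteq> 2" "u \<in> ?X" "v \<in> ?Y" for u v
    using h[of 2 "(u,v,z)"] that assms by (auto simp: p axes_def face_cells_simps)
  show "\<forall>u\<in>cubes_at_edge (p,a). \<forall>w\<in>cubes_at_edge (p,a). (u \<in> C) = (w \<in> C)"
    using assms unfolding p cubes_at_edge_def incident_coords_def
    by (elim axes_cases) (use x y z in auto)
qed

section \<open>Runs of integer sets\<close>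

(* A set X of integers stands for the union of the unit intervals [x, x + 1], x \<in> X;
   closure_points X and interior_points X are the lattice points of its closure and of its
   interior. *)
definition closure_points :: "int set \<Rightarrow> int set" where
  "closure_points X = X \<union> (\<lambda>x. x + 1) ` X"

definition interior_points :: "int set \<Rightarrow> int set" where
  "interior_points X = X \<inter> (\<lambda>x. x + 1) ` X"

(* Every maximal run of consecutive elements of X has exactly one element x with x - 1 \<notin> X. *)
definition num_runs :: "int set \<Rightarrow> int" where
  "num_runs X = int (card X) - int (card (interior_points X))"

lemma mem_image_plus_one: "x \<in> (\<lambda>x::int. x + 1) ` X \<longleftrightarrow> x - 1 \<in> X"
  by (auto simp: image_iff intro: bexI[of _ "x - 1"])

lemma mem_closure_points: "x \<in> closure_points X \<longleftrightarrow> x - 1 \<in> X \<or> x \<in> X"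
  by (auto simp: closure_points_def mem_image_plus_one)

lemma mem_interior_points: "x \<in> interior_points X \<longleftrightarrow> x - 1 \<in> X \<and> x \<in> X"
  by (auto simp: interior_points_def mem_image_plus_one)

lemma finite_closure_points [simp]: "finite X \<Longrightarrow> finite (closure_points X)"
  by (simp add: closure_points_def)

lemma finite_interior_points [simp]: "finite X \<Longrightarrow> finite (interior_points X)"
  by (simp add: interior_points_def)

lemma closure_points_mono: "X \<subseteq> Y \<Longrightarrow> closure_points X \<subseteq> closure_points Y"
  by (auto simp: mem_closure_points)

lemma interior_points_mono: "X \<subseteq> Y \<Longrightarrow> interior_points X \<subseteq> interior_points Y"
  by (auto simp: mem_interior_points)

lemma card_closure_points_plus_interior_points:
  assumes "finite X"
  shows "card (closure_points X) + card (interior_points X) = 2 * card X"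
proof -
  have "card ((\<lambda>x::int. x + 1) ` X) = card X" by (rule card_image) (simp add: inj_on_def)
  with card_Un_Int[of X "(\<lambda>x. x + 1) ` X"] assms show ?thesis
    by (simp add: closure_points_def interior_points_def)
qed

lemma card_closure_points:
  "finite X \<Longrightarrow> int (card (closure_points X)) = int (card X) + num_runs X"
  using card_closure_points_plus_interior_points[of X] by (simp add: num_runs_def)

lemma card_interior_points: "finite X \<Longrightarrow> int (card (interior_points X)) = int (card X) - num_runs X"
  by (simp add: num_runs_def)

lemma closure_points_interval: "l < u \<Longrightarrow> closure_points {l..<u} = {l..u::int}"
  by (auto simp: mem_closure_points)

lemma interior_points_interval: "interior_points {l..<u} = {l+1..<u::int}"
  by (auto simp: mem_interior_points)

lemma num_runs_interval: "l < u \<Longrightarrow> num_runs {l..<u::int} = 1"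
  by (simp add: num_runs_def interior_points_interval)

lemma num_runs_empty [simp]: "num_runs {} = 0"
  by (simp add: num_runs_def interior_points_def)

section \<open>Counting lattice cells slice by slice\<close>

definition rects_count :: "'a set \<Rightarrow> 'b set \<Rightarrow> 'a set \<Rightarrow> 'b set \<Rightarrow> 'a set \<Rightarrow> 'b set \<Rightarrow> int" where
  "rects_count A B A' B' E F =
     int (card A * card B) + int (card A' * card B') - int (card (A \<inter> A') * card (B \<inter> B'))
   - int (card E * card F)"

lemma card_rects_diff:
  assumes "finite A" "finite B" "finite A'" "finite B'" "E \<subseteq> A" "F \<subseteq> B"
  shows "int (card ((A \<times> B \<union> A' \<times> B') - E \<times> F)) = rects_count A B A' B' E F"
proof -
  have fin: "finite (A \<times> B \<union> A' \<times> B')" using assms by simp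
  have sub: "E \<times> F \<subseteq> A \<times> B \<union> A' \<times> B'" using assms by auto
  have "card (A \<times> B \<union> A' \<times> B') + card ((A \<inter> A') \<times> (B \<inter> B')) = card (A \<times> B) + card (A' \<times> B')"
    using card_Un_Int[of "A \<times> B" "A' \<times> B'"] assms by (simp add: Times_Int_Times)
  then have "int (card (A \<times> B \<union> A' \<times> B')) =
      int (card A * card B) + int (card A' * card B') - int (card (A \<inter> A') * card (B \<inter> B'))"
    unfolding card_cartesian_product by linarith
  moreover have "card (E \<times> F) \<le> card (A \<times> B \<union> A' \<times> B')"
    using card_mono[OF fin sub] .
  ultimately show ?thesis
    unfolding rects_count_def card_Diff_subset[OF finite_subset[OF sub fin] sub]
    by (simp add: card_cartesian_product of_nat_diff)
qed

definition height_slice :: "pt set \<Rightarrow> int \<Rightarrow> (int \<times> int) set" where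
  "height_slice S z = {(x,y). (x,y,z) \<in> S}"

lemma card_by_height_slices:
  assumes heights: "\<And>x y z. (x,y,z) \<in> S \<Longrightarrow> 0 \<le> z \<and> z < int K"
    and fin: "\<And>z. finite (height_slice S (int z))"
  shows "finite S" "card S = (\<Sum>z<K. card (height_slice S (int z)))"
proof -
  let ?lift = "\<lambda>z::nat. \<lambda>(x,y). (x, y, int z)"
  have S: "S = (\<Union>z<K. ?lift z ` height_slice S (int z))"
  proof (intro set_eqI iffI)
    fix p assume "p \<in> S"
    obtain x y z where p: "p = (x,y,z)" by (cases p)
    with \<open>p \<in> S\<close> heights have "0 \<le> z" "z < int K" by auto
    with \<open>p \<in> S\<close> have "nat z < K" "(x,y) \<in> height_slice S (int (nat z))"
      by (auto simp: p height_slice_def)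
    moreover have "p = ?lift (nat z) (x,y)" using \<open>0 \<le> z\<close> by (simp add: p)
    ultimately show "p \<in> (\<Union>z<K. ?lift z ` height_slice S (int z))" by blast
  qed (auto simp: height_slice_def)
  show "finite S" by (subst S) (use fin in auto)
  have "card S = (\<Sum>z<K. card (?lift z ` height_slice S (int z)))"
    by (subst S, rule card_UN_disjoint) (use fin in auto)
  also have "\<dots> = (\<Sum>z<K. card (height_slice S (int z)))"
    by (intro sum.cong refl card_image) (auto simp: inj_on_def)
  finally show "card S = (\<Sum>z<K. card (height_slice S (int z)))" .
qed

lemma card_by_rect_slices:
  fixes A B A' B' E F :: "nat \<Rightarrow> int set"
  assumes heights: "\<And>x y z. (x,y,z) \<in> S \<Longrightarrow> 0 \<le> z \<and> z < int K"
    and slice: "\<And>z. height_slice S (int z) = (A z \<times> B z \<union> A' z \<times> B' z) - E z \<times> F z"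
    and fin: "\<And>z. finite (A z)" "\<And>z. finite (B z)" "\<And>z. finite (A' z)" "\<And>z. finite (B' z)"
    and sub: "\<And>z. E z \<subseteq> A z" "\<And>z. F z \<subseteq> B z"
  shows "finite S" "int (card S) = (\<Sum>z<K. rects_count (A z) (B z) (A' z) (B' z) (E z) (F z))"
proof -
  have fin_slice: "finite (height_slice S (int z))" for z
    unfolding slice using fin by simp
  show "finite S"
    using heights fin_slice by (rule card_by_height_slices(1))
  have "card S = (\<Sum>z<K. card (height_slice S (int z)))"
    using heights fin_slice by (rule card_by_height_slices(2))
  then show "int (card S) = (\<Sum>z<K. rects_count (A z) (B z) (A' z) (B' z) (E z) (F z))"
    unfolding of_nat_sum slice using card_rects_diff[OF fin sub] by simp
qed

lemma card_by_rect_slices_single: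
  fixes A B E F :: "nat \<Rightarrow> int set"
  assumes heights: "\<And>x y z. (x,y,z) \<in> S \<Longrightarrow> 0 \<le> z \<and> z < int K"
    and slice: "\<And>z. height_slice S (int z) = A z \<times> B z - E z \<times> F z"
    and fin: "\<And>z. finite (A z)" "\<And>z. finite (B z)"
    and sub: "\<And>z. E z \<subseteq> A z" "\<And>z. F z \<subseteq> B z"
  shows "finite S" "int (card S) = (\<Sum>z<K. rects_count (A z) (B z) {} {} (E z) (F z))"
  using card_by_rect_slices[where A' = "\<lambda>_. {}" and B' = "\<lambda>_. {}", OF heights _ fin _ _ sub]
  by (simp_all add: slice)

definition axis_cells :: "(pt \<times> nat) set \<Rightarrow> nat \<Rightarrow> pt set" where
  "axis_cells E a = {p. (p,a) \<in> E}"

lemma card_by_axes: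
  assumes axes: "\<And>p a. (p,a) \<in> E \<Longrightarrow> a \<in> axes"
    and fin: "finite (axis_cells E 0)" "finite (axis_cells E 1)" "finite (axis_cells E 2)"
  shows "card E = card (axis_cells E 0) + card (axis_cells E 1) + card (axis_cells E 2)"
proof -
  let ?at = "\<lambda>a. (\<lambda>p. (p,a)) ` axis_cells E a"
  have card_at: "card (?at a) = card (axis_cells E a)" for a
    by (rule card_image) (simp add: inj_on_def)
  have E: "E = ?at 0 \<union> ?at 1 \<union> ?at 2"
  proof (intro set_eqI iffI)
    fix e assume "e \<in> E"
    moreover obtain p a where e: "e = (p,a)" by (cases e)
    ultimately have "a \<in> {0,1,2}" "p \<in> axis_cells E a"
      using axes by (auto simp: axes_def axis_cells_def)
    then show "e \<in> ?at 0 \<union> ?at 1 \<union> ?at 2" unfolding e by blast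
  qed (auto simp: axis_cells_def)
  have "card E = card (?at 0 \<union> ?at 1 \<union> ?at 2)"
    by (subst E) (rule refl)
  also have "\<dots> = card (?at 0 \<union> ?at 1) + card (?at 2)"
    using fin by (intro card_Un_disjoint) auto
  also have "card (?at 0 \<union> ?at 1) = card (?at 0) + card (?at 1)"
    using fin by (intro card_Un_disjoint) auto
  finally show ?thesis by (simp only: card_at)
qed

section \<open>Solids built from product layers\<close>

(* Vertices minus edges along the x- and y-axis plus horizontal faces in the plane between
   the layers P \<times> Q (below) and P' \<times> Q' (above). *)
definition plane_term :: "int set \<Rightarrow> int set \<Rightarrow> int set \<Rightarrow> int set \<Rightarrow> int" where
  "plane_term P Q P' Q' =
     rects_count (closure_points P) (closure_points Q) (closure_points P') (closure_points Q')
       (interior_points P \<inter> interior_points P') (interior_points Q \<inter> interior_points Q')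
   - rects_count P (closure_points Q) P' (closure_points Q') (P \<inter> P') (interior_points Q \<inter> interior_points Q')
   - rects_count (closure_points P) Q (closure_points P') Q' (interior_points P \<inter> interior_points P') (Q \<inter> Q')
   + rects_count P Q P' Q' (P \<inter> P') (Q \<inter> Q')"

(* Inside the layer P \<times> Q there are as many faces normal to the x- and y-axis as vertical edges. *)
lemma vertical_cells_cancel:
  assumes "finite P" "finite Q"
  shows "rects_count (closure_points P) Q {} {} (interior_points P) Q
       + rects_count P (closure_points Q) {} {} P (interior_points Q)
       = rects_count (closure_points P) (closure_points Q) {} {} (interior_points P) (interior_points Q)"
proof -
  have P: "int (card (closure_points P)) = 2 * int (card P) - int (card (interior_points P))"
    and Q: "int (card (closure_points Q)) = 2 * int (card Q) - int (card (interior_points Q))"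
    using card_closure_points_plus_interior_points[OF assms(1)]
      card_closure_points_plus_interior_points[OF assms(2)] by linarith+
  show ?thesis
    unfolding rects_count_def of_nat_mult P Q by (simp add: algebra_simps)
qed

lemma plane_term_crossing:
  fixes l u :: int
  assumes "l < u" and X: "X \<subseteq> {l..<u}" and Y: "Y \<subseteq> {l..<u}"
  shows "plane_term {l..<u} Y X {l..<u} = num_runs X + num_runs Y - 2 * num_runs X * num_runs Y"
    and "plane_term X {l..<u} {l..<u} Y = num_runs X + num_runs Y - 2 * num_runs X * num_runs Y"
proof -
  let ?R = "{l..<u}"
  have fin: "finite X" "finite Y" using X Y finite_subset by auto
  have cl: "closure_points ?R \<inter> closure_points X = closure_points X"
    "closure_points X \<inter> closure_points ?R = closure_points X"
    "closure_points ?R \<inter> closure_points Y = closure_points Y"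
    "closure_points Y \<inter> closure_points ?R = closure_points Y"
    using closure_points_mono[OF X] closure_points_mono[OF Y] by auto
  have int: "interior_points ?R \<inter> interior_points X = interior_points X"
    "interior_points X \<inter> interior_points ?R = interior_points X"
    "interior_points ?R \<inter> interior_points Y = interior_points Y"
    "interior_points Y \<inter> interior_points ?R = interior_points Y"
    using interior_points_mono[OF X] interior_points_mono[OF Y] by auto
  have R: "?R \<inter> X = X" "X \<inter> ?R = X" "?R \<inter> Y = Y" "Y \<inter> ?R = Y"
    using X Y by auto
  have card_R: "int (card ?R) = u - l" "int (card (closure_points ?R)) = u - l + 1"
    "int (card (interior_points ?R)) = u - l - 1"
    using \<open>l < u\<close> by (simp_all add: closure_points_interval interior_points_interval)
  show "plane_term ?R Y X ?R = num_runs X + num_runs Y - 2 * num_runs X * num_runs Y"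
    "plane_term X ?R ?R Y = num_runs X + num_runs Y - 2 * num_runs X * num_runs Y"
    unfolding plane_term_def rects_count_def cl int R of_nat_mult card_R
      card_closure_points[OF fin(1)] card_closure_points[OF fin(2)]
      card_interior_points[OF fin(1)] card_interior_points[OF fin(2)]
    by (simp_all add: algebra_simps)
qed

lemma Times3_meets: "X \<times> Y \<times> Z \<inter> C \<noteq> {} \<longleftrightarrow> (\<exists>x\<in>X. \<exists>y\<in>Y. \<exists>z\<in>Z. (x,y,z) \<in> C)"
  by auto

lemma Times3_subset: "X \<times> Y \<times> Z \<subseteq> C \<longleftrightarrow> (\<forall>x\<in>X. \<forall>y\<in>Y. \<forall>z\<in>Z. (x,y,z) \<in> C)"
  by auto

lemmas slice_simps = height_slice_def axis_cells_def mem_Collect_eq case_prod_conv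
  incident_coords_def Times3_meets Times3_subset bex_simps ball_simps Diff_iff Un_iff Int_iff mem_Times_iff
  fst_conv snd_conv mem_closure_points mem_interior_points

(* Layer i occupies the heights [i - 1, i].  Since nat (z + 1) = 0 for every z < 0, the empty
   layer 0 stands for everything below the ground. *)
locale product_layers =
  fixes C :: "pt set" and P Q :: "nat \<Rightarrow> int set" and K :: nat
  assumes mem_layers: "\<And>x y z. (x,y,z) \<in> C \<longleftrightarrow> x \<in> P (nat (z+1)) \<and> y \<in> Q (nat (z+1))"
    and ground_empty: "P 0 \<times> Q 0 = {}"
    and top_empty: "\<And>i. K \<le> i \<Longrightarrow> P i \<times> Q i = {}"
    and finite_P: "\<And>i. finite (P i)" and finite_Q: "\<And>i. finite (Q i)"
begin

lemma mem_layer_below: "(x,y,int i - 1) \<in> C \<longleftrightarrow> x \<in> P i \<and> y \<in> Q i"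
  by (simp add: mem_layers)

lemma mem_layer_above: "(x,y,int i) \<in> C \<longleftrightarrow> x \<in> P (Suc i) \<and> y \<in> Q (Suc i)"
  by (simp add: mem_layers nat_add_distrib)

lemmas mem_layer_simps = mem_layer_below mem_layer_above

lemma height_bound:
  assumes "(x,y,w) \<in> C" "w \<in> {z - 1, z}"
  shows "0 \<le> z \<and> z < int K"
proof -
  have "P (nat (w+1)) \<times> Q (nat (w+1)) \<noteq> {}"
    using assms(1) mem_layers by blast
  then have "nat (w+1) \<noteq> 0" "\<not> K \<le> nat (w+1)"
    using ground_empty top_empty by auto
  with assms(2) show ?thesis by auto
qed

lemma height_slice_boundary_vertices:
  "height_slice (boundary_vertices C) (int z) =
     (closure_points (P z) \<times> closure_points (Q z) \<union> closure_points (P (Suc z)) \<times> closure_points (Q (Suc z)))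
   - (interior_points (P z) \<inter> interior_points (P (Suc z))) \<times> (interior_points (Q z) \<inter> interior_points (Q (Suc z)))"
  by (rule set_eqI, clarify)
    (simp only: slice_simps mem_layer_simps mem_boundary_vertices cubes_at_vertex_eq, blast)

lemma height_slice_boundary_edges_0:
  "height_slice (axis_cells (boundary_edges C) 0) (int z) =
     (P z \<times> closure_points (Q z) \<union> P (Suc z) \<times> closure_points (Q (Suc z)))
   - (P z \<inter> P (Suc z)) \<times> (interior_points (Q z) \<inter> interior_points (Q (Suc z)))"
  by (rule set_eqI, clarify)
    (simp only: slice_simps mem_layer_simps mem_boundary_edges[OF axes_0] cubes_at_edge_0, blast)

lemma height_slice_boundary_edges_1:
  "height_slice (axis_cells (boundary_edges C) 1) (int z) =
     (closure_points (P z) \<times> Q z \<union> closure_points (P (Suc z)) \<times> Q (Suc z))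
   - (interior_points (P z) \<inter> interior_points (P (Suc z))) \<times> (Q z \<inter> Q (Suc z))"
  by (rule set_eqI, clarify)
    (simp only: slice_simps mem_layer_simps mem_boundary_edges[OF axes_1] cubes_at_edge_1, blast)

lemma height_slice_boundary_edges_2:
  "height_slice (axis_cells (boundary_edges C) 2) (int z) =
     closure_points (P (Suc z)) \<times> closure_points (Q (Suc z))
   - interior_points (P (Suc z)) \<times> interior_points (Q (Suc z))"
  by (rule set_eqI, clarify)
    (simp only: slice_simps mem_layer_simps mem_boundary_edges[OF axes_2] cubes_at_edge_2, blast)

lemma height_slice_boundary_faces_0:
  "height_slice (axis_cells (boundary_faces C) 0) (int z) =
     closure_points (P (Suc z)) \<times> Q (Suc z) - interior_points (P (Suc z)) \<times> Q (Suc z)"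
  by (auto simp: slice_simps mem_layer_simps mem_boundary_faces axes_def)

lemma height_slice_boundary_faces_1:
  "height_slice (axis_cells (boundary_faces C) 1) (int z) =
     P (Suc z) \<times> closure_points (Q (Suc z)) - P (Suc z) \<times> interior_points (Q (Suc z))"
  by (auto simp: slice_simps mem_layer_simps mem_boundary_faces axes_def)

lemma height_slice_boundary_faces_2:
  "height_slice (axis_cells (boundary_faces C) 2) (int z) =
     (P z \<times> Q z \<union> P (Suc z) \<times> Q (Suc z)) - (P z \<inter> P (Suc z)) \<times> (Q z \<inter> Q (Suc z))"
  by (auto simp: slice_simps mem_layer_simps mem_boundary_faces axes_def)

lemma boundary_vertices_height: "(x,y,z) \<in> boundary_vertices C \<Longrightarrow> 0 \<le> z \<and> z < int K"
  unfolding mem_boundary_vertices cubes_at_vertex_eq incident_coords_def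
  using height_bound by blast

lemma boundary_edges_height:
  assumes "((x,y,z),a) \<in> boundary_edges C"
  shows "0 \<le> z \<and> z < int K"
proof -
  from assms have "a \<in> axes" by (rule boundary_edges_axes)
  with assms have "cubes_at_edge ((x,y,z),a) \<inter> C \<noteq> {}"
    using mem_boundary_edges by blast
  then obtain u v w where in_C: "(u,v,w) \<in> C" and "(u,v,w) \<in> cubes_at_edge ((x,y,z),a)"
    by auto
  then have "w \<in> {z - 1, z}"
    unfolding mem_cubes_at_edge by (simp split: if_splits)
  with in_C show ?thesis by (rule height_bound)
qed

lemma boundary_faces_height:
  assumes "((x,y,z),b) \<in> boundary_faces C"
  shows "0 \<le> z \<and> z < int K"
proof -
  from assms have "b \<in> axes" and in_C: "(x,y,z) \<in> C \<or> (x,y,z) - unitv b \<in> C"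
    unfolding mem_boundary_faces by auto
  then obtain u v w where "(x,y,z) - unitv b = (u,v,w)" "w \<in> {z - 1, z}"
    by (elim axes_cases) auto
  with in_C show ?thesis
    using height_bound[of x y z z] height_bound[of u v w z] by auto
qed

lemmas slice_side_simps = finite_P finite_Q mem_closure_points mem_interior_points

lemma card_boundary_vertices:
  "finite (boundary_vertices C)"
  "int (card (boundary_vertices C)) = (\<Sum>z<K. rects_count
      (closure_points (P z)) (closure_points (Q z)) (closure_points (P (Suc z))) (closure_points (Q (Suc z)))
      (interior_points (P z) \<inter> interior_points (P (Suc z))) (interior_points (Q z) \<inter> interior_points (Q (Suc z))))"
  by (rule card_by_rect_slices[OF boundary_vertices_height height_slice_boundary_vertices];
      auto simp: slice_side_simps)+

lemma card_boundary_edges_0: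
  "finite (axis_cells (boundary_edges C) 0)"
  "int (card (axis_cells (boundary_edges C) 0)) = (\<Sum>z<K. rects_count
      (P z) (closure_points (Q z)) (P (Suc z)) (closure_points (Q (Suc z)))
      (P z \<inter> P (Suc z)) (interior_points (Q z) \<inter> interior_points (Q (Suc z))))"
  by (rule card_by_rect_slices[OF _ height_slice_boundary_edges_0];
      auto simp: slice_side_simps axis_cells_def dest: boundary_edges_height)+

lemma card_boundary_edges_1:
  "finite (axis_cells (boundary_edges C) 1)"
  "int (card (axis_cells (boundary_edges C) 1)) = (\<Sum>z<K. rects_count
      (closure_points (P z)) (Q z) (closure_points (P (Suc z))) (Q (Suc z))
      (interior_points (P z) \<inter> interior_points (P (Suc z))) (Q z \<inter> Q (Suc z)))"
  by (rule card_by_rect_slices[OF _ height_slice_boundary_edges_1];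
      auto simp: slice_side_simps axis_cells_def dest: boundary_edges_height)+

lemma card_boundary_edges_2:
  "finite (axis_cells (boundary_edges C) 2)"
  "int (card (axis_cells (boundary_edges C) 2)) = (\<Sum>z<K. rects_count
      (closure_points (P (Suc z))) (closure_points (Q (Suc z))) {} {}
      (interior_points (P (Suc z))) (interior_points (Q (Suc z))))"
  by (rule card_by_rect_slices_single[OF _ height_slice_boundary_edges_2];
      auto simp: slice_side_simps axis_cells_def dest: boundary_edges_height)+

lemma card_boundary_faces_0:
  "finite (axis_cells (boundary_faces C) 0)"
  "int (card (axis_cells (boundary_faces C) 0)) = (\<Sum>z<K. rects_count
      (closure_points (P (Suc z))) (Q (Suc z)) {} {} (interior_points (P (Suc z))) (Q (Suc z)))"
  by (rule card_by_rect_slices_single[OF _ height_slice_boundary_faces_0];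
      auto simp: slice_side_simps axis_cells_def dest: boundary_faces_height)+

lemma card_boundary_faces_1:
  "finite (axis_cells (boundary_faces C) 1)"
  "int (card (axis_cells (boundary_faces C) 1)) = (\<Sum>z<K. rects_count
      (P (Suc z)) (closure_points (Q (Suc z))) {} {} (P (Suc z)) (interior_points (Q (Suc z))))"
  by (rule card_by_rect_slices_single[OF _ height_slice_boundary_faces_1];
      auto simp: slice_side_simps axis_cells_def dest: boundary_faces_height)+

lemma card_boundary_faces_2:
  "finite (axis_cells (boundary_faces C) 2)"
  "int (card (axis_cells (boundary_faces C) 2)) = (\<Sum>z<K. rects_count
      (P z) (Q z) (P (Suc z)) (Q (Suc z)) (P z \<inter> P (Suc z)) (Q z \<inter> Q (Suc z)))"
  by (rule card_by_rect_slices[OF _ height_slice_boundary_faces_2];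
      auto simp: slice_side_simps axis_cells_def dest: boundary_faces_height)+

theorem boundary_euler_char_eq_sum_plane_terms:
  "boundary_euler_char C = (\<Sum>z<K. plane_term (P z) (Q z) (P (Suc z)) (Q (Suc z)))"
proof -
  have edges: "card (boundary_edges C) = card (axis_cells (boundary_edges C) 0)
      + card (axis_cells (boundary_edges C) 1) + card (axis_cells (boundary_edges C) 2)"
    using card_boundary_edges_0(1) card_boundary_edges_1(1) card_boundary_edges_2(1)
    by (intro card_by_axes) (auto simp: axis_cells_def axes_def dest: boundary_edges_axes)
  have faces: "card (boundary_faces C) = card (axis_cells (boundary_faces C) 0)
      + card (axis_cells (boundary_faces C) 1) + card (axis_cells (boundary_faces C) 2)"
    using card_boundary_faces_0(1) card_boundary_faces_1(1) card_boundary_faces_2(1)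
    by (intro card_by_axes) (auto simp: axis_cells_def axes_def mem_boundary_faces)
  have vertical: "(\<Sum>z<K. rects_count (closure_points (P (Suc z))) (Q (Suc z)) {} {} (interior_points (P (Suc z))) (Q (Suc z))
      + rects_count (P (Suc z)) (closure_points (Q (Suc z))) {} {} (P (Suc z)) (interior_points (Q (Suc z)))
      - rects_count (closure_points (P (Suc z))) (closure_points (Q (Suc z))) {} {}
          (interior_points (P (Suc z))) (interior_points (Q (Suc z)))) = 0"
    by (simp add: vertical_cells_cancel finite_P finite_Q)
  have "boundary_euler_char C = int (card (boundary_vertices C)) - int (card (boundary_edges C))
      + int (card (boundary_faces C))"
    unfolding boundary_euler_char_def boundary_vertices_def boundary_edges_def ..
  also have "\<dots> = (\<Sum>z<K. plane_term (P z) (Q z) (P (Suc z)) (Q (Suc z)))"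
    using vertical
    unfolding edges faces of_nat_add card_boundary_vertices(2) card_boundary_edges_0(2)
      card_boundary_edges_1(2) card_boundary_edges_2(2) card_boundary_faces_0(2)
      card_boundary_faces_1(2) card_boundary_faces_2(2) plane_term_def
    by (simp add: sum.distrib sum_subtractf algebra_simps)
  finally show ?thesis .
qed

end

section \<open>Block configurations\<close>

definition slot_coords :: "nat set \<Rightarrow> int set" where
  "slot_coords S = (\<lambda>j. int j - 1) ` S"

definition layer_x :: "nat \<Rightarrow> (nat \<times> nat) set \<Rightarrow> nat \<Rightarrow> int set" where
  "layer_x n B i = (if odd i then {0..<int n} else slot_coords (level B i))"

definition layer_y :: "nat \<Rightarrow> (nat \<times> nat) set \<Rightarrow> nat \<Rightarrow> int set" where
  "layer_y n B i = (if odd i then slot_coords (level B i) else {0..<int n})"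

definition level_runs :: "(nat \<times> nat) set \<Rightarrow> nat \<Rightarrow> int" where
  "level_runs B i = num_runs (slot_coords (level B i))"

lemma mem_slot_coords: "y \<in> slot_coords S \<longleftrightarrow> 0 \<le> y + 1 \<and> nat (y + 1) \<in> S"
proof
  assume "y \<in> slot_coords S"
  then obtain j where "j \<in> S" "y = int j - 1" by (auto simp: slot_coords_def)
  then show "0 \<le> y + 1 \<and> nat (y + 1) \<in> S" by simp
next
  assume "0 \<le> y + 1 \<and> nat (y + 1) \<in> S"
  then have "y = int (nat (y + 1)) - 1" "nat (y + 1) \<in> S" by auto
  then show "y \<in> slot_coords S" unfolding slot_coords_def by blast
qed

lemma card_slot_coords: "card (slot_coords S) = card S"
  unfolding slot_coords_def by (rule card_image) (simp add: inj_on_def)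

lemma slot_coords_empty [simp]: "slot_coords {} = {}"
  by (simp add: slot_coords_def)

lemma slot_coords_interval: "slot_coords {a..<b} = {int a - 1..<int b - 1}"
  by (auto simp: mem_slot_coords)

lemma slot_coords_subset: "S \<subseteq> {1..n} \<Longrightarrow> slot_coords S \<subseteq> {0..<int n}"
  by (auto simp: slot_coords_def)

lemma mem_block_cubes:
  "(x,y,z) \<in> block_cubes n i j \<longleftrightarrow> z = int i - 1 \<and>
     (if odd i then 0 \<le> x \<and> x < int n \<and> y = int j - 1 else x = int j - 1 \<and> 0 \<le> y \<and> y < int n)"
  by (auto simp: block_cubes_def)

lemma mem_config_cubes:
  assumes "\<And>i j. (i,j) \<in> B \<Longrightarrow> 1 \<le> i"
  shows "(x,y,z) \<in> config_cubes n B \<longleftrightarrow> x \<in> layer_x n B (nat (z+1)) \<and> y \<in> layer_y n B (nat (z+1))"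
proof -
  have "(x,y,z) \<in> config_cubes n B \<longleftrightarrow> (\<exists>j. (nat (z+1), j) \<in> B \<and> (x,y,z) \<in> block_cubes n (nat (z+1)) j)"
  proof -
    have "i = nat (z+1)" if "(i,j) \<in> B" "(x,y,z) \<in> block_cubes n i j" for i j
      using assms[OF that(1)] that(2) by (simp add: mem_block_cubes)
    then show ?thesis
      unfolding config_cubes_def by blast
  qed
  also have "\<dots> \<longleftrightarrow> x \<in> layer_x n B (nat (z+1)) \<and> y \<in> layer_y n B (nat (z+1))"
    using assms[of 0] by (auto simp: mem_block_cubes layer_x_def layer_y_def mem_slot_coords level_def)
  finally show ?thesis .
qed

lemma level_subset: "B \<subseteq> {1..<K} \<times> {1..n} \<Longrightarrow> level B i \<subseteq> {1..n}"
  by (auto simp: level_def)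

lemma level_empty: "B \<subseteq> {1..<K} \<times> {1..n} \<Longrightarrow> i = 0 \<or> K \<le> i \<Longrightarrow> level B i = {}"
  by (auto simp: level_def)

lemma product_layers_config_cubes:
  assumes B: "B \<subseteq> {1..<K} \<times> {1..n}"
  shows "product_layers (config_cubes n B) (layer_x n B) (layer_y n B) K"
proof
  show "(x,y,z) \<in> config_cubes n B \<longleftrightarrow> x \<in> layer_x n B (nat (z+1)) \<and> y \<in> layer_y n B (nat (z+1))" for x y z
    using B by (intro mem_config_cubes) auto
  show "layer_x n B 0 \<times> layer_y n B 0 = {}"
    using level_empty[OF B] by (simp add: layer_x_def slot_coords_def)
  show "layer_x n B i \<times> layer_y n B i = {}" if "K \<le> i" for i
    using level_empty[OF B] that by (simp add: layer_x_def layer_y_def slot_coords_def)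
  show "finite (layer_x n B i)" "finite (layer_y n B i)" for i
    using finite_subset[OF level_subset[OF B]] by (simp_all add: layer_x_def layer_y_def slot_coords_def)
qed

theorem boundary_euler_char_config_cubes:
  assumes B: "B \<subseteq> {1..<K} \<times> {1..n}" and "1 \<le> n"
  shows "boundary_euler_char (config_cubes n B) =
    (\<Sum>z<K. level_runs B z + level_runs B (Suc z) - 2 * level_runs B z * level_runs B (Suc z))"
proof -
  interpret product_layers "config_cubes n B" "layer_x n B" "layer_y n B" K
    using B by (rule product_layers_config_cubes)
  have row: "(0::int) < int n" using \<open>1 \<le> n\<close> by simp
  have slots: "slot_coords (level B i) \<subseteq> {0..<int n}" for i
    using slot_coords_subset[OF level_subset[OF B]] .
  have "plane_term (layer_x n B z) (layer_y n B z) (layer_x n B (Suc z)) (layer_y n B (Suc z)) =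
      level_runs B z + level_runs B (Suc z) - 2 * level_runs B z * level_runs B (Suc z)" for z
    using plane_term_crossing[OF row slots slots]
    by (cases "odd z") (simp_all add: layer_x_def layer_y_def level_runs_def algebra_simps)
  then show ?thesis
    using boundary_euler_char_eq_sum_plane_terms by simp
qed

section \<open>The configurations Q(n,k)\<close>

lemma num_runs_slot_coords_nonadjacent:
  assumes "\<forall>j\<in>S. \<forall>j'\<in>S. j' \<noteq> j + 1"
  shows "num_runs (slot_coords S) = int (card S)"
proof -
  have "interior_points (slot_coords S) = {}"
    using assms by (force simp: mem_interior_points mem_slot_coords)
  then show ?thesis by (simp add: num_runs_def card_slot_coords)
qed

lemma num_runs_slot_coords_interval: "a < b \<Longrightarrow> num_runs (slot_coords {a..<b}) = 1"
  by (simp add: slot_coords_interval num_runs_interval)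

lemma level_runs_Q:
  assumes "n \<ge> 2" "k \<ge> 3" "is_Q n k B"
  shows "level_runs B i =
    (if 1 \<le> i \<and> i \<le> 2*k-3 then int (n div 2) else if i = 2*k-2 \<or> i = 2*k-1 then 1 else 0)"
proof -
  from assms(3) obtain a where
      B: "B \<subseteq> {1..2*k-1} \<times> {1..n}"
    and top: "level B (2*k-1) = {a..<a + n div 2}"
    and full: "level B (2*k-2) = {1..n}"
    and low: "\<forall>i\<in>{1..2*k-3}. card (level B i) = n div 2 \<and> (\<forall>j\<in>level B i. \<forall>j'\<in>level B i. j' \<noteq> j + 1)"
    unfolding is_Q_def by blast
  show ?thesis
  proof (cases "1 \<le> i \<and> i \<le> 2*k-3")
    case True
    with low show ?thesis by (simp add: level_runs_def num_runs_slot_coords_nonadjacent)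
  next
    case False
    have "{1..n} = {1..<n+1}" by auto
    then have "level_runs B (2*k-2) = 1" "level_runs B (2*k-1) = 1"
      using assms(1) full top num_runs_slot_coords_interval by (simp_all add: level_runs_def)
    moreover have "level B i = {}" if "i = 0 \<or> 2*k \<le> i"
      using B that assms(2) by (force simp: level_def)
    ultimately show ?thesis
      using False assms(2) by (auto simp: level_runs_def)
  qed
qed

lemma sum_plane_runs:
  fixes r :: "nat \<Rightarrow> int"
  assumes "r 0 = 0" "\<And>i. 1 \<le> i \<Longrightarrow> i \<le> M + 1 \<Longrightarrow> r i = m"
    "r (M+2) = 1" "r (M+3) = 1" "r (M+4) = 0"
  shows "(\<Sum>z<M+4. r z + r (Suc z) - 2 * r z * r (Suc z)) = 2 - 2 * int M * m * (m - 1)"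
proof -
  let ?f = "\<lambda>z. r z + r (Suc z) - 2 * r z * r (Suc z)"
  have r: "r (Suc 0) = m" "r (Suc M) = m" "r (Suc (Suc M)) = 1" "r (Suc (Suc (Suc M))) = 1"
    "r (Suc (Suc (Suc (Suc M)))) = 0"
    using assms by (simp_all add: numeral_eq_Suc)
  have "M + 4 = Suc (Suc (Suc (Suc M)))" by simp
  then have "(\<Sum>z<M+4. ?f z) = (\<Sum>z<Suc M. ?f z) + ?f (Suc M) + ?f (Suc (Suc M)) + ?f (Suc (Suc (Suc M)))"
    by (simp only: sum.lessThan_Suc)
  also have "(\<Sum>z<Suc M. ?f z) = ?f 0 + (\<Sum>z<M. ?f (Suc z))"
    by (rule sum.lessThan_Suc_shift)
  also have "(\<Sum>z<M. ?f (Suc z)) = (\<Sum>z<M. 2 * m - 2 * m * m)"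
    using assms(2) by (intro sum.cong) auto
  finally show ?thesis
    using assms(1) r by (simp add: algebra_simps)
qed

theorem mainTheorem4:
  fixes n k :: nat and B :: "(nat \<times> nat) set"
  assumes "n \<ge> 2" and "even n" and "k \<ge> 3"
    and "is_Q n k B"
  shows "boundary_genus (config_cubes n B) = real n * (real n - 2) * (real k - 2) / 2"
proof -
  define M m where "M = 2*k - 4" and "m = n div 2"
  have "1 \<le> n" using assms(1) by simp
  have "{1..2*k-1} \<subseteq> {1..<M+4}" using assms(3) by (auto simp: M_def)
  then have B: "B \<subseteq> {1..<M+4} \<times> {1..n}"
    using assms(4) unfolding is_Q_def by blast
  have "boundary_euler_char (config_cubes n B) = 2 - 2 * int M * int m * (int m - 1)"
    unfolding boundary_euler_char_config_cubes[OF B \<open>1 \<le> n\<close>] m_def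
    by (rule sum_plane_runs[where r = "level_runs B"])
      (use assms(3) in \<open>auto simp: level_runs_Q[OF assms(1,3,4)] M_def\<close>)
  then have chi: "real_of_int (boundary_euler_char (config_cubes n B)) = 2 - 2 * real M * real m * (real m - 1)"
    by simp
  have n: "real n = 2 * real m" and M: "real M = 2 * real k - 4"
    using assms(2,3) by (auto simp: M_def m_def)
  show ?thesis
    unfolding boundary_genus_def chi n M by (simp add: field_simps)
qed

end
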